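(* Let $n\ge2$ and let $\varphi$ be a skew morphism of $\mathbb{Z}_n$ with even complexity and auto-order $m$. Then $\varphi$ is uniquely determined by the triple $(\varphi(1),\varphi',\varphi|_{\langle m\rangle})$: if $\psi$ is any skew morphism of $\mathbb{Z}_n$ with even complexity such that $\psi(1)=\varphi(1)$, $\psi'=\varphi'$ and $\psi(x)=\varphi(x)$ for all $x$ in the subgroup $\langle m\rangle$ of $\mathbb{Z}_n$, then $\psi=\varphi$.
   Context: $\mathbb{Z}_n$ is the cyclic group of integers modulo $n$; $\langle m\rangle$ is the subgroup generated by $m$. A skew morphism of a finite group $G$ is a permutation $\varphi$ of $G$ fixing the identity such that for each $a\in G$ there is a non-negative integer $i_a$ with $\varphi(ab)=\varphi(a)\varphi^{i_a}(b)$ for all $b\in G$. ${\rm ord}(\varphi)$ is the order of $\langle\varphi\rangle$. If $\varphi$ is non-trivial, $\pi_\varphi(a)$ is the unique such $i_a\in\{1,\dots,{\rm ord}(\varphi)-1\}$; if $\varphi$ is the identity, $\pi_\varphi(a)=1$. Let $\sigma_\varphi(x,y)=\sum_{i=0}^{x-1}\pi_\varphi(\varphi^i(y))\in\mathbb{Z}_{{\rm ord}(\varphi)}$. The derived skew morphism $\varphi'$ of a skew morphism $\varphi$ of $\mathbb{Z}_n$ is the skew morphism of $\mathbb{Z}_{{\rm ord}(\varphi)}$ given by $\varphi'(a)=\sigma_\varphi(a,1)$. Set $\varphi^{(0)}=\varphi$, $\varphi^{(i+1)}=(\varphi^{(i)})'$. For $n\ge 2$ the complexity of $\varphi$ is the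 unique non-negative integer $c$ such that $\varphi^{(c)}$ is a skew morphism of a non-trivial cyclic group $\mathbb{Z}_m$ and $\varphi^{(c+1)}$ is a skew morphism of $\mathbb{Z}_1$; $m$ is the auto-order of $\varphi$. (When the complexity is even, $m$ divides $n$ and $\varphi$ maps $\langle m\rangle$ onto itself.) *)

theory Defs
  imports Main
begin

text \<open>Z_n is represented by the natural numbers {0..<n} with addition mod n.
A map Z_n -> Z_n is a function nat => nat; only its values on {..<n} matter.\<close>

definition skew :: "nat \<Rightarrow> (nat \<Rightarrow> nat) \<Rightarrow> bool" where
  "skew n f \<longleftrightarrow> bij_betw f {..<n} {..<n} \<and> f 0 = 0 \<and>
     (\<forall>a<n. \<exists>i. \<forall>b<n. f ((a + b) mod n) = (f a + (f ^^ i) b) mod n)"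

definition sord :: "nat \<Rightarrow> (nat \<Rightarrow> nat) \<Rightarrow> nat" where
  "sord n f = (LEAST k. 0 < k \<and> (\<forall>x<n. (f ^^ k) x = x))"

definition spi :: "nat \<Rightarrow> (nat \<Rightarrow> nat) \<Rightarrow> nat \<Rightarrow> nat" where
  "spi n f a = (if (\<forall>x<n. f x = x) then 1 else
     (THE i. 1 \<le> i \<and> i < sord n f \<and>
        (\<forall>b<n. f ((a + b) mod n) = (f a + (f ^^ i) b) mod n)))"

definition ssigma :: "nat \<Rightarrow> (nat \<Rightarrow> nat) \<Rightarrow> nat \<Rightarrow> nat \<Rightarrow> nat" where
  "ssigma n f x y = (\<Sum>i<x. spi n f ((f ^^ i) y)) mod sord n f"

text \<open>derived skew morphism: a map of Z_(sord n f)\<close>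
definition derived :: "nat \<Rightarrow> (nat \<Rightarrow> nat) \<Rightarrow> (nat \<Rightarrow> nat)" where
  "derived n f = (\<lambda>a. ssigma n f a (1 mod n))"

text \<open>k-th derived skew morphism together with the order of its underlying group\<close>
fun deriv_iter :: "nat \<Rightarrow> nat \<Rightarrow> (nat \<Rightarrow> nat) \<Rightarrow> nat \<times> (nat \<Rightarrow> nat)" where
  "deriv_iter 0 n f = (n, f)"
| "deriv_iter (Suc k) n f =
     (let (m, g) = deriv_iter k n f in (sord m g, derived m g))"

definition complexity :: "nat \<Rightarrow> (nat \<Rightarrow> nat) \<Rightarrow> nat" where
  "complexity n f = (THE c. 2 \<le> fst (deriv_iter c n f) \<and> fst (deriv_iter (Suc c) n f) = 1)"

definition auto_order :: "nat \<Rightarrow> (nat \<Rightarrow> nat) \<Rightarrow> nat" where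
  "auto_order n f = fst (deriv_iter (complexity n f) n f)"

definition cyc_subgroup :: "nat \<Rightarrow> nat \<Rightarrow> nat set" where
  "cyc_subgroup n m = {x. \<exists>k. x = (k * m) mod n}"

end

(*
  A skew morphism f of Z_n is determined by its derived map d and the orbit of 1: iterating
  f^k(1 + x) = f^k(1) + f^(d k)(x) gives f^k(x) = sum_(i<x) f^(d^i k)(1).

  If the complexity of phi is even and m is its auto-order, then phi(x) = x (mod m).  This is
  proved by descending two derivation levels at a time: d(a + 1) - d(a) = d^(f^a 1)(1), so
  the orbit of 1 under f is controlled by the orbit of 1 under d, and one level further down by
  the orbit of 1 under the second derived map, which stays in 1 + <m> by induction.

  Hence the orbit of 1 under phi stays in 1 + <m>, where phi(1 + y) = phi(1) + phi^(d 1)(y)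
  only involves phi(1), d and the restriction of phi to <m>.  So psi and phi have the same orbit
  of 1 and the same derived map, and therefore coincide.
*)

theory Submission
  imports Defs "HOL-Combinatorics.Cycles"
begin

lemma add_mod_cancel_left:
  fixes c x y n :: nat
  assumes "x < n" "y < n" "(c + x) mod n = (c + y) mod n"
  shows "x = y"
proof -
  have "x = y" if "x \<le> y" "y < n" "(c + x) mod n = (c + y) mod n" for x y
  proof -
    have "n dvd y - x" using mod_eq_dvd_iff_nat[of "c + x" "c + y" n] that by simp
    moreover have "y - x < n" using that by linarith
    ultimately show ?thesis using that(1) by (metis diff_is_0_eq le_antisym nat_dvd_not_less neq0_conv)
  qed
  then show ?thesis using assms by (metis nat_le_linear)
qed

lemma sum_lessThan_add:
  fixes g :: "nat \<Rightarrow> 'a::comm_monoid_add"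
  shows "(\<Sum>i<x + b. g i) = (\<Sum>i<x. g i) + (\<Sum>i<b. g (x + i))"
  by (induction b) (simp_all add: add.assoc)

lemma funpow_mult_fixed: "(g ^^ k) x = x \<Longrightarrow> (g ^^ (k * q)) x = x"
  by (induction q) (simp_all add: funpow_add)

lemma id_if_commutes_with_translation:
  fixes g :: "nat \<Rightarrow> nat"
  assumes a: "a < n" and g0: "g 0 = 0"
    and translation: "\<forall>b<n. g ((a + b) mod n) = (g a + b) mod n"
    and y: "y < n"
  shows "g y = y"
proof -
  have shift: "g z = (g a + (n - a) + z) mod n" if "z < n" for z
  proof -
    have "(a + (z + (n - a)) mod n) mod n = z"
      using that a by (simp add: mod_add_right_eq)
    then show ?thesis
      using translation[rule_format, of "(z + (n - a)) mod n"] a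
      by (simp add: mod_add_right_eq ac_simps)
  qed
  have "(g a + (n - a)) mod n = 0" using shift[of 0] g0 a by simp
  then show ?thesis using shift[OF y] y by (metis add_0 mod_add_left_eq mod_less)
qed

definition fixes_cosets :: "nat \<Rightarrow> nat \<Rightarrow> (nat \<Rightarrow> nat) \<Rightarrow> bool" where
  "fixes_cosets m N g \<longleftrightarrow> m dvd N \<and> (\<forall>x<N. g x mod m = x mod m)"

lemma fixes_cosets_funpow:
  assumes "fixes_cosets m N g" "\<forall>x<N. g x < N" "x < N"
  shows "(g ^^ i) x mod m = x mod m"
proof -
  have "(g ^^ i) x < N \<and> (g ^^ i) x mod m = x mod m"
    by (induction i) (use assms in \<open>auto simp: fixes_cosets_def\<close>)
  then show ?thesis ..
qed

lemma cyc_subgroupI: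
  assumes "y < n" "m dvd y"
  shows "y \<in> cyc_subgroup n m"
proof -
  from \<open>m dvd y\<close> obtain k where "y = m * k" ..
  then have "y = (k * m) mod n" using assms(1) by (simp add: mult.commute)
  then show ?thesis unfolding cyc_subgroup_def by blast
qed

section \<open>Skew morphisms of cyclic groups\<close>

locale skew_morphism =
  fixes n :: nat and f :: "nat \<Rightarrow> nat"
  assumes skew: "skew n f" and two_le_n: "2 \<le> n"
begin

abbreviation r :: nat where "r \<equiv> sord n f"
abbreviation d :: "nat \<Rightarrow> nat" where "d \<equiv> derived n f"

(* The paper's sigma_phi(k, a), before reduction modulo ord phi. *)
definition sigma :: "nat \<Rightarrow> nat \<Rightarrow> nat" where
  "sigma k a = (\<Sum>i<k. spi n f ((f ^^ i) a))"

lemma one_less_n: "1 < n"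
  using two_le_n by simp

lemma f_zero: "f 0 = 0"
  using skew unfolding skew_def by blast

lemma bij_betw_funpow_f: "bij_betw (f ^^ k) {..<n} {..<n}"
  using skew bij_betw_funpow unfolding skew_def by blast

lemma funpow_less: "x < n \<Longrightarrow> (f ^^ k) x < n"
  using bij_betw_funpow_f bij_betwE by blast

lemma funpow_inj: "x < n \<Longrightarrow> y < n \<Longrightarrow> (f ^^ k) x = (f ^^ k) y \<Longrightarrow> x = y"
  using bij_betw_funpow_f by (metis bij_betw_imp_inj_on inj_on_def lessThan_iff)

lemma funpow_zero: "(f ^^ k) 0 = 0"
  by (induction k) (simp_all add: f_zero)

lemma funpow_diff_eq:
  assumes "x < n" "y < n" "v \<le> u" "(f ^^ u) x = (f ^^ v) y"
  shows "(f ^^ (u - v)) x = y"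
proof -
  have "(f ^^ v) ((f ^^ (u - v)) x) = (f ^^ v) y"
    using assms(3,4) by (metis comp_apply funpow_add le_add_diff_inverse)
  then show ?thesis using assms(1,2) funpow_inj funpow_less by blast
qed

lemma exists_funpow_id: "\<exists>k>0. \<forall>x<n. (f ^^ k) x = x"
proof -
  define g where "g x = (if x < n then f x else x)" for x
  have "bij_betw g {..<n} {..<n}"
    using skew bij_betw_cong[of "{..<n}" f g] unfolding skew_def g_def by simp
  then have "g permutes {..<n}" by (rule bij_imp_permutes) (simp add: g_def)
  then have "permutation g" by (auto simp: permutation_permutes)
  then obtain k where "(g ^^ k) = id" "0 < k" by (rule permutation_is_nilpotent)
  moreover have "(g ^^ j) x = (f ^^ j) x" if "x < n" for j x
    by (induction j) (simp_all add: g_def funpow_less that)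
  ultimately show ?thesis by (metis id_apply)
qed

lemma order_pos: "0 < r" and funpow_order: "x < n \<Longrightarrow> (f ^^ r) x = x"
  using LeastI_ex[OF exists_funpow_id] unfolding sord_def by blast+

lemma funpow_mod_order: "x < n \<Longrightarrow> (f ^^ (k mod r)) x = (f ^^ k) x"
  using funpow_mult_fixed[OF funpow_order, of x "k div r"]
  by (metis comp_apply funpow_add mod_mult_div_eq)

lemma funpow_id_iff_dvd: "(\<forall>x<n. (f ^^ k) x = x) \<longleftrightarrow> r dvd k"
proof
  assume id: "\<forall>x<n. (f ^^ k) x = x"
  have "\<not> 0 < k mod r"
  proof
    assume "0 < k mod r"
    moreover have "k mod r < r" using order_pos by simp
    ultimately show False
      using not_less_Least[of "k mod r" "\<lambda>k. 0 < k \<and> (\<forall>x<n. (f ^^ k) x = x)"]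
        id funpow_mod_order unfolding sord_def by auto
  qed
  then show "r dvd k" by auto
next
  assume "r dvd k"
  then show "\<forall>x<n. (f ^^ k) x = x" using funpow_mult_fixed[OF funpow_order] by auto
qed

lemma funpow_eq_imp_mod_eq:
  assumes "\<forall>x<n. (f ^^ u) x = (f ^^ v) x"
  shows "u mod r = v mod r"
proof -
  have "u mod r = v mod r" if "v \<le> u" "\<forall>x<n. (f ^^ u) x = (f ^^ v) x" for u v
  proof -
    have "\<forall>x<n. (f ^^ (u - v)) x = x" using that funpow_diff_eq by blast
    then show ?thesis using that(1) funpow_id_iff_dvd mod_eq_dvd_iff_nat by blast
  qed
  then show ?thesis using assms by (metis nat_le_linear)
qed

lemma f_add_spi:
  assumes a: "a < n" and b: "b < n"
  shows "f ((a + b) mod n) = (f a + (f ^^ spi n f a) b) mod n"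
proof (cases "\<forall>x<n. f x = x")
  case True
  then show ?thesis using a b by (simp add: spi_def)
next
  case False
  let ?P = "\<lambda>i. 1 \<le> i \<and> i < r \<and> (\<forall>b<n. f ((a + b) mod n) = (f a + (f ^^ i) b) mod n)"
  obtain i where "\<forall>b<n. f ((a + b) mod n) = (f a + (f ^^ i) b) mod n"
    using skew a unfolding skew_def by blast
  then have i: "\<forall>b<n. f ((a + b) mod n) = (f a + (f ^^ (i mod r)) b) mod n"
    using funpow_mod_order by simp
  have "i mod r \<noteq> 0"
  proof
    assume "i mod r = 0"
    then have "\<forall>y<n. f y = y" using id_if_commutes_with_translation[of a n f] a f_zero i by simp
    then show False using False by blast
  qed
  then have P: "?P (i mod r)" using i order_pos by simp
  have "j = i mod r" if "?P j" for j
  proof -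
    have "\<forall>x<n. (f ^^ j) x = (f ^^ (i mod r)) x"
    proof (intro allI impI)
      fix x assume x: "x < n"
      have "(f a + (f ^^ j) x) mod n = (f a + (f ^^ (i mod r)) x) mod n"
        using that P x by metis
      then show "(f ^^ j) x = (f ^^ (i mod r)) x" using add_mod_cancel_left funpow_less x by blast
    qed
    then have "j mod r = i mod r mod r" by (rule funpow_eq_imp_mod_eq)
    then show ?thesis using that by simp
  qed
  then have "spi n f a = i mod r" unfolding spi_def using False P by (auto intro: the_equality)
  then show ?thesis using i b by simp
qed

lemma sigma_Suc: "sigma (Suc k) a = sigma k a + spi n f ((f ^^ k) a)"
  by (simp add: sigma_def)

lemma sigma_add: "sigma (k + l) a = sigma k a + sigma l ((f ^^ k) a)"
proof -
  have "(f ^^ (k + i)) a = (f ^^ i) ((f ^^ k) a)" for i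
    by (metis add.commute comp_apply funpow_add)
  then show ?thesis by (simp add: sigma_def sum_lessThan_add)
qed

lemma funpow_add_sigma:
  assumes a: "a < n" and b: "b < n"
  shows "(f ^^ k) ((a + b) mod n) = ((f ^^ k) a + (f ^^ sigma k a) b) mod n"
proof (induction k)
  case 0
  then show ?case using a b by (simp add: sigma_def)
next
  case (Suc k)
  have "(f ^^ Suc k) ((a + b) mod n) = f (((f ^^ k) a + (f ^^ sigma k a) b) mod n)"
    using Suc by simp
  also have "\<dots> = (f ((f ^^ k) a) + (f ^^ spi n f ((f ^^ k) a)) ((f ^^ sigma k a) b)) mod n"
    using f_add_spi funpow_less a b by simp
  also have "(f ^^ spi n f ((f ^^ k) a)) ((f ^^ sigma k a) b) = (f ^^ sigma (Suc k) a) b"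
    by (metis sigma_Suc add.commute comp_apply funpow_add)
  finally show ?case by simp
qed

lemma derived_eq_sigma: "d k = sigma k 1 mod r"
  unfolding derived_def ssigma_def sigma_def using one_less_n by simp

lemma derived_less: "d k < r"
  using derived_eq_sigma order_pos by simp

lemma funpow_derived_less: "b < r \<Longrightarrow> (d ^^ x) b < r"
  by (cases x) (simp_all add: derived_less)

lemma funpow_one_add: "x < n \<Longrightarrow> (f ^^ k) ((1 + x) mod n) = ((f ^^ k) 1 + (f ^^ d k) x) mod n"
  using funpow_add_sigma[OF one_less_n, of x k] funpow_mod_order derived_eq_sigma by simp

lemma derived_mod_order: "d (k mod r) = d k"
proof -
  have "\<forall>x<n. (f ^^ d (k mod r)) x = (f ^^ d k) x"
  proof (intro allI impI)
    fix x assume x: "x < n"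
    have "((f ^^ k) 1 + (f ^^ d (k mod r)) x) mod n = ((f ^^ k) 1 + (f ^^ d k) x) mod n"
      using funpow_one_add[OF x, of k] funpow_one_add[OF x, of "k mod r"]
        funpow_mod_order[of 1 k] funpow_mod_order[of "(1 + x) mod n" k] one_less_n by simp
    then show "(f ^^ d (k mod r)) x = (f ^^ d k) x" using add_mod_cancel_left funpow_less x by blast
  qed
  then have "d (k mod r) mod r = d k mod r" by (rule funpow_eq_imp_mod_eq)
  then show ?thesis using derived_less by simp
qed

lemma funpow_mod_eq_sum: "(f ^^ k) (x mod n) = (\<Sum>i<x. (f ^^ (d ^^ i) k) 1) mod n"
proof (induction x arbitrary: k)
  case 0
  then show ?case by (simp add: funpow_zero)
next
  case (Suc x)
  have "Suc x mod n = (1 + x mod n) mod n" by (simp add: mod_Suc_eq)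
  then have "(f ^^ k) (Suc x mod n) = ((f ^^ k) 1 + (f ^^ d k) (x mod n)) mod n"
    using funpow_one_add one_less_n by simp
  also have "\<dots> = ((f ^^ k) 1 + (\<Sum>i<x. (f ^^ (d ^^ i) (d k)) 1)) mod n"
    using Suc.IH[of "d k"] by (simp add: mod_add_right_eq)
  also have "(\<Sum>i<x. (f ^^ (d ^^ i) (d k)) 1) = (\<Sum>i<x. (f ^^ (d ^^ Suc i) k) 1)"
    by (simp add: funpow_Suc_right del: funpow.simps)
  also have "(f ^^ k) 1 + \<dots> = (\<Sum>i<Suc x. (f ^^ (d ^^ i) k) 1)"
    by (simp only: sum.lessThan_Suc_shift funpow_0 id_apply)
  finally show ?case .
qed

lemma funpow_add_derived:
  assumes b: "b < n"
  shows "(f ^^ k) ((x + b) mod n) = ((f ^^ k) (x mod n) + (f ^^ (d ^^ x) k) b) mod n"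
proof -
  let ?T = "\<lambda>k i. (f ^^ (d ^^ i) k) 1"
  have shift: "?T k (x + i) = ?T ((d ^^ x) k) i" for i
    by (metis add.commute comp_apply funpow_add)
  have "(f ^^ k) ((x + b) mod n) = (\<Sum>i<x + b. ?T k i) mod n"
    by (rule funpow_mod_eq_sum)
  also have "\<dots> = ((\<Sum>i<x. ?T k i) + (\<Sum>i<b. ?T ((d ^^ x) k) i)) mod n"
    by (simp only: sum_lessThan_add shift)
  also have "\<dots> = ((\<Sum>i<x. ?T k i) mod n + (\<Sum>i<b. ?T ((d ^^ x) k) i) mod n) mod n"
    by (rule mod_add_eq[symmetric])
  also have "\<dots> = ((f ^^ k) (x mod n) + (f ^^ (d ^^ x) k) (b mod n)) mod n"
    by (simp only: funpow_mod_eq_sum)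
  finally show ?thesis using b by simp
qed

lemma sigma_mod_order: "sigma k (x mod n) mod r = (d ^^ x) k mod r"
proof -
  have "\<forall>b<n. (f ^^ sigma k (x mod n)) b = (f ^^ (d ^^ x) k) b"
  proof (intro allI impI)
    fix b assume b: "b < n"
    have "((f ^^ k) (x mod n) + (f ^^ sigma k (x mod n)) b) mod n = (f ^^ k) ((x mod n + b) mod n)"
      using funpow_add_sigma[of "x mod n" b k] b one_less_n by simp
    also have "\<dots> = ((f ^^ k) (x mod n) + (f ^^ (d ^^ x) k) b) mod n"
      using funpow_add_derived[OF b, of k x] by (simp only: mod_add_left_eq)
    finally show "(f ^^ sigma k (x mod n)) b = (f ^^ (d ^^ x) k) b"
      using add_mod_cancel_left funpow_less b by blast
  qed
  then show ?thesis by (rule funpow_eq_imp_mod_eq)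
qed

lemma derived_Suc: "d (Suc a) = (d a + (d ^^ (f ^^ a) 1) 1) mod r"
proof -
  have "d (Suc a) = (sigma a 1 + sigma 1 ((f ^^ a) 1)) mod r"
    using sigma_add[of a 1 1] derived_eq_sigma by simp
  also have "\<dots> = (d a + sigma 1 ((f ^^ a) 1) mod r) mod r"
    using derived_eq_sigma by (simp add: mod_add_eq)
  also have "sigma 1 ((f ^^ a) 1) mod r = (d ^^ (f ^^ a) 1) 1 mod r"
    using sigma_mod_order[of 1 "(f ^^ a) 1"] funpow_less one_less_n by simp
  finally show ?thesis by (simp add: mod_add_right_eq)
qed

section \<open>The orbit of 1 and the derived skew morphism\<close>

lemma sigma_dvd_order:
  assumes k: "r dvd k" and a: "a < n"
  shows "r dvd sigma k a"
proof -
  have id: "\<forall>y<n. (f ^^ k) y = y" using k funpow_id_iff_dvd by blast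
  have "\<forall>x<n. (f ^^ sigma k a) x = x"
  proof (intro allI impI)
    fix x assume x: "x < n"
    have "(a + x) mod n = (f ^^ k) ((a + x) mod n)" using id one_less_n by simp
    also have "\<dots> = ((f ^^ k) a + (f ^^ sigma k a) x) mod n" by (rule funpow_add_sigma[OF a x])
    finally show "(f ^^ sigma k a) x = x" using id a x add_mod_cancel_left funpow_less by metis
  qed
  then show ?thesis using funpow_id_iff_dvd by blast
qed

lemma sigma_mult_fixed:
  assumes "(f ^^ a) x = x"
  shows "sigma (a * q) x = q * sigma a x"
proof (induction q)
  case 0
  then show ?case by (simp add: sigma_def)
next
  case (Suc q)
  then show ?case using sigma_add[of a "a * q" x] assms by (simp add: mult_Suc_right)
qed

lemma dvd_sigma_one:
  assumes "k dvd r" "(f ^^ k) 1 = 1" "k dvd a"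
  shows "k dvd sigma a 1"
proof -
  obtain i where i: "r = i * k" using assms(1) by (metis dvdE mult.commute)
  obtain q where q: "a = k * q" using assms(3) ..
  have "(f ^^ a) 1 = 1" using funpow_mult_fixed assms(2) q by simp
  moreover have "r dvd sigma (a * i) 1" using sigma_dvd_order one_less_n i q by simp
  ultimately have "i * k dvd i * sigma a 1" using sigma_mult_fixed i by simp
  moreover have "0 < i" using i order_pos by simp
  ultimately show ?thesis by simp
qed

lemma funpow_id_if_fixes_one:
  assumes k: "k dvd r" "(f ^^ k) 1 = 1" and x: "x < n"
  shows "(f ^^ k) x = x"
proof -
  have "\<forall>a. k dvd a \<longrightarrow> (f ^^ a) x = x" using x
  proof (induction x)
    case 0
    then show ?case by (simp add: funpow_zero)
  next
    case (Suc x)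
    show ?case
    proof (intro allI impI)
      fix a assume "k dvd a"
      then obtain q where "a = k * q" ..
      then have fixed: "(f ^^ a) 1 = 1" using funpow_mult_fixed[OF k(2)] by simp
      have "x < n" using Suc.prems by simp
      then have "(f ^^ sigma a 1) x = x"
        using Suc.IH dvd_sigma_one[OF k \<open>k dvd a\<close>] by blast
      have "(f ^^ a) (Suc x) = (f ^^ a) ((1 + x) mod n)" using Suc.prems by simp
      also have "\<dots> = ((f ^^ a) 1 + (f ^^ sigma a 1) x) mod n"
        using funpow_add_sigma[OF one_less_n, of x a] Suc.prems by simp
      finally show "(f ^^ a) (Suc x) = Suc x"
        using Suc.prems fixed \<open>(f ^^ sigma a 1) x = x\<close> by simp
    qed
  qed
  then show ?thesis by simp
qed

lemma funpow_one_eq_one_iff: "(f ^^ k) 1 = 1 \<longleftrightarrow> r dvd k"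
proof
  assume fixed: "(f ^^ k) 1 = 1"
  define g where "g = gcd k r"
  have "(f ^^ g) 1 = 1"
  proof (cases "k = 0")
    case True
    then show ?thesis using g_def funpow_order one_less_n by simp
  next
    case False
    then obtain u v where uv: "k * u = r * v + g" using bezout_nat g_def by blast
    have "(f ^^ g) 1 = (f ^^ (r * v)) ((f ^^ g) 1)"
      using funpow_mult_fixed[OF funpow_order] funpow_less one_less_n by simp
    also have "\<dots> = (f ^^ (k * u)) 1" using uv by (simp add: funpow_add)
    also have "\<dots> = 1" using funpow_mult_fixed[OF fixed] .
    finally show ?thesis .
  qed
  moreover have "g dvd r" "g dvd k" using g_def by simp_all
  ultimately have "\<forall>x<n. (f ^^ g) x = x" using funpow_id_if_fixes_one by blast
  then have "r dvd g" using funpow_id_iff_dvd by blast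
  then show "r dvd k" using \<open>g dvd k\<close> by (rule dvd_trans)
next
  assume "r dvd k"
  then show "(f ^^ k) 1 = 1" using funpow_id_iff_dvd one_less_n by blast
qed

lemma funpow_one_eq_imp_mod_eq:
  assumes "(f ^^ u) 1 = (f ^^ v) 1"
  shows "u mod r = v mod r"
proof -
  have "u mod r = v mod r" if "v \<le> u" "(f ^^ u) 1 = (f ^^ v) 1" for u v
    using that funpow_diff_eq[of 1 1 v u] funpow_one_eq_one_iff mod_eq_dvd_iff_nat one_less_n by simp
  then show ?thesis using assms by (metis nat_le_linear)
qed

lemma order_less: "r < n"
proof -
  have "inj_on (\<lambda>k. (f ^^ k) 1) {..<r}"
    by (intro inj_onI) (metis funpow_one_eq_imp_mod_eq lessThan_iff mod_less)
  moreover have "(f ^^ k) 1 \<in> {1..<n}" for k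
    using funpow_less[of 1 k] funpow_inj[of 1 0 k] funpow_zero one_less_n by fastforce
  then have "(\<lambda>k. (f ^^ k) 1) ` {..<r} \<subseteq> {1..<n}" by blast
  ultimately have "card {..<r} \<le> card {1..<n}" by (intro card_inj_on_le) auto
  then show ?thesis using two_le_n by simp
qed

lemma inj_on_derived: "inj_on d {..<r}"
proof (rule inj_onI)
  fix a b assume ab: "a \<in> {..<r}" "b \<in> {..<r}" "d a = d b"
  have last: "n - 1 < n" "(1 + (n - 1)) mod n = 0" using one_less_n by auto
  have "((f ^^ d a) (n - 1) + (f ^^ a) 1) mod n = ((f ^^ d a) (n - 1) + (f ^^ b) 1) mod n"
    using funpow_one_add[OF last(1), of a] funpow_one_add[OF last(1), of b] ab(3) last(2)
    by (simp add: funpow_zero add.commute)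
  then have "(f ^^ a) 1 = (f ^^ b) 1" using add_mod_cancel_left funpow_less one_less_n by blast
  then show "a = b" using funpow_one_eq_imp_mod_eq ab(1,2) by (metis lessThan_iff mod_less)
qed

lemma skew_derived: "skew r d"
proof -
  have "d ` {..<r} = {..<r}"
    using endo_inj_surj[OF _ _ inj_on_derived] derived_less by auto
  then have "bij_betw d {..<r} {..<r}" using inj_on_derived by (simp add: bij_betw_def)
  moreover have "d 0 = 0" using derived_eq_sigma by (simp add: sigma_def)
  moreover have "d ((a + b) mod r) = (d a + (d ^^ (f ^^ a) 1) b) mod r" if "b < r" for a b
  proof -
    have "d ((a + b) mod r) = (sigma a 1 + sigma b ((f ^^ a) 1)) mod r"
      using derived_mod_order derived_eq_sigma sigma_add by simp
    also have "\<dots> = (d a + sigma b ((f ^^ a) 1) mod r) mod r"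
      using derived_eq_sigma by (simp add: mod_add_eq)
    also have "sigma b ((f ^^ a) 1) mod r = (d ^^ (f ^^ a) 1) b"
      using sigma_mod_order[of b "(f ^^ a) 1"] funpow_less one_less_n funpow_derived_less that
      by simp
    finally show ?thesis .
  qed
  ultimately show ?thesis unfolding skew_def by blast
qed

lemma derived_skew_morphism: "2 \<le> r \<Longrightarrow> skew_morphism r d"
  using skew_derived by unfold_locales

lemma sord_derived_dvd:
  assumes r2: "2 \<le> r"
  shows "sord r d dvd n"
proof -
  interpret D: skew_morphism r d using derived_skew_morphism[OF r2] .
  have "(d ^^ n) 1 mod r = 1 mod r"
  proof (rule funpow_eq_imp_mod_eq, intro allI impI)
    fix b assume "b < n"
    then show "(f ^^ (d ^^ n) 1) b = (f ^^ 1) b"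
      using funpow_add_derived[of b 1 n] f_zero funpow_less by simp
  qed
  then have "(d ^^ n) 1 = (d ^^ 0) 1" using funpow_derived_less[of 1 n] r2 by simp
  then have "n mod D.r = 0" using D.funpow_one_eq_imp_mod_eq by fastforce
  then show ?thesis by (rule mod_0_imp_dvd)
qed

lemma orbit_mod_sord_derived:
  assumes r2: "2 \<le> r"
  shows "(f ^^ a) 1 mod sord r d = (derived r d ^^ a) 1 mod sord r d"
proof -
  interpret D: skew_morphism r d using derived_skew_morphism[OF r2] .
  have "(d a + (d ^^ (f ^^ a) 1) 1) mod r = (d a + (d ^^ (D.d ^^ a) 1) 1) mod r"
    using derived_Suc[of a] D.funpow_add_derived[of 1 1 a] derived_mod_order r2
    by (simp add: mod_Suc_eq)
  moreover have "(d ^^ j) 1 < r" for j using funpow_derived_less r2 by simp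
  ultimately have "(d ^^ (f ^^ a) 1) 1 = (d ^^ (D.d ^^ a) 1) 1"
    using add_mod_cancel_left by blast
  then show ?thesis by (rule D.funpow_one_eq_imp_mod_eq)
qed

lemma fixes_cosets_if_second_derived:
  assumes r2: "2 \<le> r" and m2: "2 \<le> m" and e: "fixes_cosets m (sord r d) (derived r d)"
  shows "fixes_cosets m n f"
proof -
  interpret D: skew_morphism r d using derived_skew_morphism[OF r2] .
  have m_dvd: "m dvd D.r" using e unfolding fixes_cosets_def ..
  have "m \<le> D.r" using m_dvd D.order_pos by (rule dvd_imp_le)
  then have D_d_less: "\<forall>x<D.r. D.d x < D.r" "1 < D.r" using D.derived_less m2 by simp_all
  have orbit: "(f ^^ a) 1 mod m = 1" for a
  proof -
    have "(f ^^ a) 1 mod D.r mod m = (D.d ^^ a) 1 mod D.r mod m"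
      using orbit_mod_sord_derived[OF r2, of a] by simp
    then have "(f ^^ a) 1 mod m = (D.d ^^ a) 1 mod m" by (simp only: mod_mod_cancel[OF m_dvd])
    also have "\<dots> = 1 mod m" using fixes_cosets_funpow[OF e D_d_less] .
    finally show ?thesis using m2 by simp
  qed
  have m_dvd_n: "m dvd n" using m_dvd sord_derived_dvd[OF r2] by (rule dvd_trans)
  have "f x mod m = x mod m" if "x < n" for x
  proof -
    have "f x mod m = (\<Sum>i<x. (f ^^ (d ^^ i) 1) 1) mod n mod m"
      using funpow_mod_eq_sum[of 1 x] that by simp
    also have "\<dots> = (\<Sum>i<x. (f ^^ (d ^^ i) 1) 1 mod m) mod m"
      using m_dvd_n by (simp add: mod_mod_cancel mod_sum_eq)
    finally show ?thesis using orbit by simp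
  qed
  then show ?thesis unfolding fixes_cosets_def using m_dvd_n by blast
qed

end

section \<open>Complexity and auto-order\<close>

lemma sord_one: "skew 1 g \<Longrightarrow> sord 1 g = 1"
  unfolding sord_def skew_def by (intro Least_equality) auto

lemma skew_one_derived: "skew 1 g \<Longrightarrow> skew 1 (derived 1 g)"
  unfolding skew_def derived_def ssigma_def by (simp add: sord_one[unfolded skew_def] lessThan_Suc)

lemma skew_derived_order:
  assumes "skew N g" "0 < N"
  shows "skew (sord N g) (derived N g) \<and> 0 < sord N g"
proof (cases "N = 1")
  case True
  then show ?thesis using assms sord_one skew_one_derived by simp
next
  case False
  then interpret skew_morphism N g by unfold_locales (use assms in auto)
  show ?thesis using skew_derived order_pos by simp
qed

lemma deriv_iter_add:
  "deriv_iter (j + k) N g = deriv_iter j (fst (deriv_iter k N g)) (snd (deriv_iter k N g))"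
  by (induction j) (simp_all add: case_prod_beta Let_def)

lemma deriv_iter_Suc': "deriv_iter (Suc j) N g = deriv_iter j (sord N g) (derived N g)"
  using deriv_iter_add[of j 1] by simp

declare deriv_iter.simps(2) [simp del]

lemma skew_deriv_iter:
  "skew N g \<Longrightarrow> 0 < N \<Longrightarrow> skew (fst (deriv_iter j N g)) (snd (deriv_iter j N g)) \<and> 0 < fst (deriv_iter j N g)"
proof (induction j arbitrary: N g)
  case (Suc j)
  then show ?case using skew_derived_order deriv_iter_Suc' by simp
qed simp

lemma deriv_iter_one: "skew 1 g \<Longrightarrow> fst (deriv_iter j 1 g) = 1"
proof (induction j arbitrary: g)
  case (Suc j)
  then show ?case using deriv_iter_Suc' sord_one skew_one_derived by simp
qed simp

lemma two_le_if_deriv_iter: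
  assumes "skew N g" "0 < N" "2 \<le> fst (deriv_iter j N g)"
  shows "2 \<le> N"
  using assms deriv_iter_one[of g j] by (cases "N = 1") auto

lemma deriv_iter_bound:
  assumes "skew N g" "0 < N" "2 \<le> fst (deriv_iter j N g)"
  shows "fst (deriv_iter j N g) + j \<le> N"
  using assms
proof (induction j arbitrary: N g)
  case (Suc j)
  interpret skew_morphism N g
    using Suc.prems two_le_if_deriv_iter by unfold_locales blast+
  have "fst (deriv_iter j r d) + j \<le> r"
    using Suc.IH[of r d] skew_derived order_pos Suc.prems(3) deriv_iter_Suc' by simp
  then show ?case using order_less deriv_iter_Suc' by simp
qed simp

lemma deriv_iter_one_after:
  assumes "skew N g" "0 < N" "fst (deriv_iter k N g) = 1" "k \<le> j"
  shows "fst (deriv_iter j N g) = 1"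
proof -
  have "skew 1 (snd (deriv_iter k N g))" using skew_deriv_iter[OF assms(1,2), of k] assms(3) by simp
  then show ?thesis
    using deriv_iter_add[of "j - k" k N g] deriv_iter_one assms(3,4) by simp
qed

lemma deriv_iter_self: "skew N g \<Longrightarrow> 0 < N \<Longrightarrow> fst (deriv_iter N N g) = 1"
  using deriv_iter_bound[of N g N] skew_deriv_iter[of N g N] by fastforce

lemma complexity_spec:
  assumes g: "skew n g" and n: "2 \<le> n"
  shows "2 \<le> fst (deriv_iter (complexity n g) n g) \<and> fst (deriv_iter (Suc (complexity n g)) n g) = 1"
proof -
  let ?D = "\<lambda>j. fst (deriv_iter j n g)"
  have pos: "0 < ?D j" for j using skew_deriv_iter g n by simp
  have stays: "?D j = 1" if "?D k = 1" "k \<le> j" for j k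
    using deriv_iter_one_after[OF g _ that] n by simp
  have "?D n = 1" using deriv_iter_self g n by simp
  define c where "c = (LEAST j. ?D (Suc j) = 1)"
  have "?D (Suc (n - 1)) = 1" using \<open>?D n = 1\<close> n by simp
  then have c1: "?D (Suc c) = 1" unfolding c_def by (rule LeastI)
  have c2: "2 \<le> ?D c"
  proof (cases c)
    case 0
    then show ?thesis using n by simp
  next
    case (Suc c')
    then have "?D (Suc c') \<noteq> 1" using not_less_Least[of c' "\<lambda>j. ?D (Suc j) = 1"] c_def by simp
    then show ?thesis using pos[of "Suc c'"] Suc by simp
  qed
  have unique: "c' = c" if c': "2 \<le> ?D c'" "?D (Suc c') = 1" for c'
  proof (rule ccontr)
    assume "c' \<noteq> c"
    then consider "Suc c \<le> c'" | "Suc c' \<le> c" by linarith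
    then show False
    proof cases
      case 1
      then have "?D c' = 1" using stays[OF c1] by simp
      then show False using c'(1) by simp
    next
      case 2
      then have "?D c = 1" using stays[OF c'(2)] by simp
      then show False using c2 by simp
    qed
  qed
  have "complexity n g = c" unfolding complexity_def
    by (rule the_equality) (use c1 c2 unique in blast)+
  then show ?thesis using c1 c2 by simp
qed

lemma fixes_cosets_even_deriv_iter:
  assumes "skew N g" "0 < N"
    and "2 \<le> fst (deriv_iter (2 * j) N g)" "fst (deriv_iter (Suc (2 * j)) N g) = 1"
  shows "fixes_cosets (fst (deriv_iter (2 * j) N g)) N g"
  using assms
proof (induction j arbitrary: N g)
  case 0
  then interpret skew_morphism N g by unfold_locales simp_all
  have "r = 1" using 0 deriv_iter_Suc'[of 0 N g] by simp
  then show ?case using funpow_order unfolding fixes_cosets_def by simp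
next
  case (Suc j)
  interpret skew_morphism N g
    using Suc.prems two_le_if_deriv_iter by unfold_locales blast+
  have level: "deriv_iter (Suc k) N g = deriv_iter k r d" for k by (rule deriv_iter_Suc')
  have r2: "2 \<le> r"
    using two_le_if_deriv_iter[of r d "Suc (2 * j)"] skew_derived order_pos Suc.prems(3) level
    by simp
  interpret D: skew_morphism r d using derived_skew_morphism[OF r2] .
  have D_level: "deriv_iter (Suc (Suc k)) N g = deriv_iter k D.r D.d" for k
    using level deriv_iter_Suc'[of k r d] by simp
  have "fixes_cosets (fst (deriv_iter (2 * j) D.r D.d)) D.r D.d"
    using Suc.IH[of D.r D.d] D.skew_derived D.order_pos Suc.prems(3,4) D_level by simp
  then show ?case
    using fixes_cosets_if_second_derived[OF r2] Suc.prems(3) D_level by simp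
qed

lemma fixes_cosets_auto_order:
  assumes "skew n g" "2 \<le> n" "even (complexity n g)"
  shows "fixes_cosets (auto_order n g) n g"
proof -
  obtain j where "complexity n g = 2 * j" using assms(3) by (rule evenE)
  then show ?thesis
    using fixes_cosets_even_deriv_iter[of n g j] complexity_spec[OF assms(1,2)] assms(1,2)
    unfolding auto_order_def by simp
qed

lemma skew_morphism_eqI:
  assumes "skew_morphism n \<phi>" "skew_morphism n \<psi>"
    and "\<forall>a. (\<psi> ^^ a) 1 = (\<phi> ^^ a) 1" "derived n \<psi> = derived n \<phi>" "x < n"
  shows "\<psi> x = \<phi> x"
proof -
  interpret \<phi>: skew_morphism n \<phi> by fact
  interpret \<psi>: skew_morphism n \<psi> by fact
  show ?thesis using \<phi>.funpow_mod_eq_sum[of 1 x] \<psi>.funpow_mod_eq_sum[of 1 x] assms by simp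
qed

lemma skew_morphism_eq_if_agree_on_subgroup:
  assumes \<phi>: "skew_morphism n \<phi>" and \<psi>: "skew_morphism n \<psi>"
    and cosets: "fixes_cosets m n \<phi>"
    and one: "\<psi> 1 = \<phi> 1" and derived: "derived n \<psi> = derived n \<phi>"
    and subgroup: "\<forall>y<n. m dvd y \<longrightarrow> \<psi> y = \<phi> y"
    and x: "x < n"
  shows "\<psi> x = \<phi> x"
proof -
  interpret \<phi>: skew_morphism n \<phi> by fact
  interpret \<psi>: skew_morphism n \<psi> by fact
  have "\<forall>x<n. \<phi> x < n" using \<phi>.funpow_less[where k = 1] by simp
  then have coset_funpow: "(\<phi> ^^ i) y mod m = y mod m" if "y < n" for i y
    using fixes_cosets_funpow[OF cosets] that by blast
  have on_subgroup: "(\<psi> ^^ i) y = (\<phi> ^^ i) y" if "y < n" "m dvd y" for i y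
  proof (induction i)
    case (Suc i)
    have "(\<phi> ^^ i) y < n" "m dvd (\<phi> ^^ i) y"
      using \<phi>.funpow_less coset_funpow[of y i] that by (auto simp: mod_eq_0_iff_dvd)
    then show ?case using Suc subgroup by simp
  qed simp
  have "(\<psi> ^^ a) 1 = (\<phi> ^^ a) 1" for a
  proof (induction a)
    case (Suc a)
    define y where "y = (\<phi> ^^ a) 1 - 1"
    have "0 < (\<phi> ^^ a) 1"
      using \<phi>.funpow_inj[of 1 0 a] \<phi>.funpow_zero \<phi>.one_less_n by fastforce
    moreover have "(\<phi> ^^ a) 1 mod m = 1 mod m" using coset_funpow \<phi>.one_less_n by simp
    ultimately have y: "m dvd y" "y < n" "(1 + y) mod n = (\<phi> ^^ a) 1"
      using \<phi>.funpow_less[of 1 a] \<phi>.one_less_n mod_eq_dvd_iff_nat[of 1 "(\<phi> ^^ a) 1" m]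
      by (auto simp: y_def)
    have "(\<psi> ^^ Suc a) 1 = \<psi> ((1 + y) mod n)" using Suc y(3) by simp
    also have "\<dots> = (\<psi> 1 + (\<psi> ^^ derived n \<psi> 1) y) mod n" using \<psi>.funpow_one_add[of y 1] y(2) by simp
    also have "\<dots> = (\<phi> 1 + (\<phi> ^^ derived n \<phi> 1) y) mod n" using one derived on_subgroup y(1,2) by simp
    also have "\<dots> = (\<phi> ^^ Suc a) 1" using \<phi>.funpow_one_add[of y 1] y(2,3) by simp
    finally show ?case .
  qed simp
  then show ?thesis using skew_morphism_eqI[OF \<phi> \<psi> _ derived x] by simp
qed

theorem theorem4p3:
  fixes n :: nat and \<phi> \<psi> :: "nat \<Rightarrow> nat"
  assumes "n \<ge> 2"
    and "skew n \<phi>" and "even (complexity n \<phi>)"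
    and "skew n \<psi>" and "even (complexity n \<psi>)"
    and "\<psi> 1 = \<phi> 1"
    and "sord n \<psi> = sord n \<phi>"
    and "\<forall>x < sord n \<phi>. derived n \<psi> x = derived n \<phi> x"
    and "\<forall>x \<in> cyc_subgroup n (auto_order n \<phi>). \<psi> x = \<phi> x"
  shows "\<forall>x < n. \<psi> x = \<phi> x"
proof -
  interpret \<phi>: skew_morphism n \<phi> using assms(1,2) by unfold_locales
  interpret \<psi>: skew_morphism n \<psi> using assms(1,4) by unfold_locales
  have "derived n \<psi> = derived n \<phi>"
  proof
    fix k
    show "derived n \<psi> k = derived n \<phi> k"
      using \<psi>.derived_mod_order[of k] \<phi>.derived_mod_order[of k] \<phi>.order_pos assms(7,8) by simp
  qed
  moreover have "\<forall>y<n. auto_order n \<phi> dvd y \<longrightarrow> \<psi> y = \<phi> y"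
    using assms(9) cyc_subgroupI by blast
  ultimately show ?thesis
    using skew_morphism_eq_if_agree_on_subgroup[OF \<phi>.skew_morphism_axioms \<psi>.skew_morphism_axioms
        fixes_cosets_auto_order[OF assms(2,1,3)] assms(6)]
    by blast
qed

end
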